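(* For any L-primitive set $A\subset\mathbb{Z}_{>1}$, the lower natural density satisfies $\underline{\mathrm{d}}(\mathrm{L}_A)\ge\sum_{a\in A}\mathrm{d}(\mathrm{L}_a)$. Moreover, if $\sum_{a\in A}1/a<\infty$, then the natural density $\mathrm{d}(\mathrm{L}_A)$ exists and equals $\sum_{a\in A}\mathrm{d}(\mathrm{L}_a)$.
   Context: For an integer $a>1$ with largest prime factor $P(a)$, $\mathrm{L}_a=\{ba: b\in\mathbb{N},\ \text{every prime } p\mid b \text{ satisfies } p\ge P(a)\}$, which has natural density $\mathrm{d}(\mathrm{L}_a)=\frac1a\prod_{p<P(a)}(1-\frac1p)$; $\mathrm{L}_A=\bigcup_{a\in A}\mathrm{L}_a$. $\underline{\mathrm{d}}(S)=\liminf_{x\to\infty}|S\cap[1,x]|/x$. A set $A\subset\mathbb{Z}_{>1}$ is L-primitive if $a'\notin\mathrm{L}_a$ for all distinct $a,a'\in A$. *)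

theory Defs
  imports "HOL-Analysis.Analysis" "HOL-Computational_Algebra.Primes"
begin

definition Pmax :: "nat \<Rightarrow> nat" where
  "Pmax a = Max (prime_factors a)"

definition Lset :: "nat \<Rightarrow> nat set" where
  "Lset a = {b * a | b. b \<ge> 1 \<and> (\<forall>p. prime p \<longrightarrow> p dvd b \<longrightarrow> p \<ge> Pmax a)}"

definition LsetA :: "nat set \<Rightarrow> nat set" where
  "LsetA A = (\<Union>a\<in>A. Lset a)"

definition dL :: "nat \<Rightarrow> real" where
  "dL a = (1 / real a) * (\<Prod>p\<in>{p. prime p \<and> p < Pmax a}. (1 - 1 / real p))"

definition L_primitive :: "nat set \<Rightarrow> bool" where
  "L_primitive A \<longleftrightarrow> (\<forall>a\<in>A. \<forall>a'\<in>A. a \<noteq> a' \<longrightarrow> a' \<notin> Lset a)"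

definition count_ratio :: "nat set \<Rightarrow> real \<Rightarrow> real" where
  "count_ratio S x = real (card {n \<in> S. 1 \<le> n \<and> real n \<le> x}) / x"

definition lower_density :: "nat set \<Rightarrow> ereal" where
  "lower_density S = Liminf at_top (\<lambda>x::real. ereal (count_ratio S x))"

end

theory Submission
  imports Defs "HOL-Number_Theory.Totient" "HOL-Real_Asymp.Real_Asymp"
begin

(* If n = b a lies in L_a, then a divides n and n, a have the same p-adic valuation for every
   prime p < P(a). So if n lies in L_a and in L_a', where (P(a), v_P(a)(a)) is lexicographically at
   most (P(a'), v_P(a)(a')), comparing valuations shows that a divides a' with a quotient free of
   primes below P(a), i.e. a' is in L_a. Hence the L_a of an L-primitive set are pairwise disjoint.

   L_a is a times the set of integers coprime to Q = prod_{p < P(a)} p, a set that is periodic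
   modulo Q with density phi(Q)/Q = prod_{p < P(a)} (1 - 1/p); so L_a has density d(L_a), and by
   disjointness every finite subfamily F of A gives a subset of L_A of density sum_{a in F} d(L_a).
   If sum 1/a converges, the elements of L_A outside L_F have counting ratio at most
   sum_{a in A - F} 1/a, which squeezes the counting ratio of L_A. *)

section \<open>Disjointness of the sets L_a\<close>

lemma le_Pmax:
  assumes "a \<noteq> 0" "prime p" "p dvd a"
  shows "p \<le> Pmax a"
  unfolding Pmax_def using assms by (intro Max_ge) (auto simp: prime_factors_dvd)

lemma multiplicity_mult_eq_iff_not_dvd:
  fixes a b p :: nat
  assumes "prime p" "a \<noteq> 0" "b \<noteq> 0"
  shows "multiplicity p (b * a) = multiplicity p a \<longleftrightarrow> \<not> p dvd b"
proof -
  have "multiplicity p (b * a) = multiplicity p b + multiplicity p a"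
    using assms by (simp add: prime_elem_multiplicity_mult_distrib)
  moreover have "multiplicity p b = 0 \<longleftrightarrow> \<not> p dvd b"
    using assms prime_multiplicity_gt_zero_iff[of p b] by auto
  ultimately show ?thesis by simp
qed

lemma Lset_iff_multiplicity:
  assumes "a > 0"
  shows "n \<in> Lset a \<longleftrightarrow>
    n > 0 \<and> a dvd n \<and> (\<forall>p. prime p \<longrightarrow> p < Pmax a \<longrightarrow> multiplicity p n = multiplicity p a)"
proof
  assume "n \<in> Lset a"
  then obtain b where b: "n = b * a" "b > 0" "\<And>p. prime p \<Longrightarrow> p dvd b \<Longrightarrow> p \<ge> Pmax a"
    unfolding Lset_def by auto
  have "multiplicity p n = multiplicity p a" if "prime p" "p < Pmax a" for p
  proof -
    have "\<not> p dvd b" using b(3)[OF that(1)] that(2) by linarith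
    then show ?thesis unfolding b(1) using that(1) assms b(2) by (simp add: multiplicity_mult_eq_iff_not_dvd)
  qed
  moreover have "n > 0" "a dvd n" using b(1,2) assms by simp_all
  ultimately show "n > 0 \<and> a dvd n \<and> (\<forall>p. prime p \<longrightarrow> p < Pmax a \<longrightarrow> multiplicity p n = multiplicity p a)"
    by blast
next
  assume n: "n > 0 \<and> a dvd n \<and> (\<forall>p. prime p \<longrightarrow> p < Pmax a \<longrightarrow> multiplicity p n = multiplicity p a)"
  then obtain b where b: "n = b * a" by (metis dvdE mult.commute)
  with n have b0: "b > 0" by simp
  have "p \<ge> Pmax a" if "prime p" "p dvd b" for p
  proof (rule ccontr)
    assume "\<not> p \<ge> Pmax a"
    then have "multiplicity p (b * a) = multiplicity p a" using n that(1) b by simp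
    with that b0 assms show False by (simp add: multiplicity_mult_eq_iff_not_dvd)
  qed
  with b b0 show "n \<in> Lset a" unfolding Lset_def by auto
qed

lemma mem_Lset_if_common_element:
  assumes "a > 0" "a' > 0" "n \<in> Lset a" "n \<in> Lset a'"
    and "Pmax a < Pmax a' \<or> Pmax a = Pmax a' \<and> multiplicity (Pmax a) a \<le> multiplicity (Pmax a) a'"
  shows "a' \<in> Lset a"
proof -
  have Pmax_le: "Pmax a \<le> Pmax a'" using assms(5) by linarith
  have n: "n > 0" "a dvd n"
    and low: "\<And>p. prime p \<Longrightarrow> p < Pmax a \<Longrightarrow> multiplicity p n = multiplicity p a"
    and low': "\<And>p. prime p \<Longrightarrow> p < Pmax a' \<Longrightarrow> multiplicity p n = multiplicity p a'"
    using assms(3,4) Lset_iff_multiplicity[OF assms(1)] Lset_iff_multiplicity[OF assms(2)] by auto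
  have "multiplicity p a \<le> multiplicity p a'" if p: "prime p" for p
  proof -
    consider "p < Pmax a" | "p = Pmax a" "Pmax a < Pmax a'" | "p = Pmax a" "Pmax a = Pmax a'"
      | "p > Pmax a" using Pmax_le by linarith
    then show ?thesis
    proof cases
      case 1
      then show ?thesis using low low' p Pmax_le by simp
    next
      case 2
      then show ?thesis using low' p n dvd_imp_multiplicity_le[OF n(2), of p] by simp
    next
      case 3
      then show ?thesis using assms(5) by simp
    next
      case 4
      then have "\<not> p dvd a" using le_Pmax[of a p] p assms(1) by auto
      then show ?thesis by (simp add: not_dvd_imp_multiplicity_0)
    qed
  qed
  then have "a dvd a'" using assms(1) by (intro multiplicity_le_imp_dvd) auto
  moreover have "multiplicity p a' = multiplicity p a" if "prime p" "p < Pmax a" for p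
    using low[OF that] low'[of p] that Pmax_le by simp
  ultimately show ?thesis using assms(2) Lset_iff_multiplicity[OF assms(1)] by blast
qed

lemma disjoint_family_Lset:
  assumes "\<forall>a\<in>A. a > 0" "L_primitive A"
  shows "disjoint_family_on Lset A"
  unfolding disjoint_family_on_def
proof (intro ballI impI equals0I)
  fix a a' n assume a: "a \<in> A" "a' \<in> A" "a \<noteq> a'" and "n \<in> Lset a \<inter> Lset a'"
  then have n: "n \<in> Lset a" "n \<in> Lset a'" by simp_all
  have pos: "a > 0" "a' > 0" using a assms(1) by auto
  have "a' \<in> Lset a \<or> a \<in> Lset a'"
  proof (cases "Pmax a < Pmax a' \<or> Pmax a = Pmax a' \<and> multiplicity (Pmax a) a \<le> multiplicity (Pmax a) a'")
    case True
    then show ?thesis using mem_Lset_if_common_element[OF pos n] by blast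
  next
    case False
    then have "Pmax a' < Pmax a \<or> Pmax a' = Pmax a \<and> multiplicity (Pmax a') a' \<le> multiplicity (Pmax a') a"
      by auto
    then show ?thesis using mem_Lset_if_common_element[OF pos(2,1) n(2,1)] by blast
  qed
  moreover have "a' \<notin> Lset a" "a \<notin> Lset a'"
    using assms(2) a unfolding L_primitive_def by simp_all
  ultimately show False by blast
qed

section \<open>Integers coprime to a modulus\<close>

definition primorial_below :: "nat \<Rightarrow> nat" where
  "primorial_below P = \<Prod>{p. prime p \<and> p < P}"

lemma finite_primes_below: "finite {p::nat. prime p \<and> p < P}"
  by (rule finite_subset[of _ "{..<P}"]) auto

lemma primorial_below_pos: "primorial_below P > 0"
  unfolding primorial_below_def using finite_primes_below
  by (intro prod_pos) (auto simp: prime_gt_0_nat)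

lemma coprime_primorial_below_iff:
  "coprime b (primorial_below P) \<longleftrightarrow> (\<forall>p. prime p \<longrightarrow> p dvd b \<longrightarrow> P \<le> p)"
proof
  assume coprime: "coprime b (primorial_below P)"
  show "\<forall>p. prime p \<longrightarrow> p dvd b \<longrightarrow> P \<le> p"
  proof (intro allI impI, rule ccontr)
    fix p :: nat assume p: "prime p" "p dvd b" "\<not> P \<le> p"
    then have "p dvd primorial_below P"
      unfolding primorial_below_def by (intro dvd_prod_eqI[OF finite_primes_below]) auto
    with coprime p(2) have "is_unit p" by (rule coprime_common_divisor)
    with p(1) show False by simp
  qed
next
  assume rough: "\<forall>p. prime p \<longrightarrow> p dvd b \<longrightarrow> P \<le> p"
  show "coprime b (primorial_below P)"
    unfolding primorial_below_def
  proof (rule prod_coprime_right)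
    fix p assume "p \<in> {p. prime p \<and> p < P}"
    then have "prime p" "\<not> p dvd b" using rough by auto
    then show "coprime b p" using prime_imp_coprime coprime_commute by auto
  qed
qed

lemma prime_dvd_primorial_below_iff:
  assumes "prime p"
  shows "p dvd primorial_below P \<longleftrightarrow> p < P"
proof
  assume dvd: "p dvd primorial_below P"
  show "p < P"
  proof (rule ccontr)
    assume "\<not> p < P"
    then have "coprime p (primorial_below P)"
      using assms by (auto simp: coprime_primorial_below_iff dest: primes_dvd_imp_eq)
    from coprime_common_divisor[OF this dvd_refl dvd] assms show False by simp
  qed
next
  assume "p < P"
  then show "p dvd primorial_below P"
    unfolding primorial_below_def using assms by (intro dvd_prod_eqI[OF finite_primes_below]) auto
qed

lemma prime_factors_primorial_below: "prime_factors (primorial_below P) = {p. prime p \<and> p < P}"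
  using primorial_below_pos[of P] by (auto simp: prime_factors_dvd prime_dvd_primorial_below_iff)

lemma dL_eq_totient_primorial_below:
  "dL a = real (totient (primorial_below (Pmax a))) / (real a * real (primorial_below (Pmax a)))"
  using totient_formula2[of "primorial_below (Pmax a)"] primorial_below_pos[of "Pmax a"]
  by (simp add: dL_def prime_factors_primorial_below)

lemma Lset_eq_image_coprime:
  "Lset a = (\<lambda>b. b * a) ` {b. b > 0 \<and> coprime b (primorial_below (Pmax a))}"
  unfolding Lset_def coprime_primorial_below_iff by (auto simp: Suc_le_eq)

lemma periodic_add_mult:
  assumes periodic: "\<And>b. P (b + Q) = P b"
  shows "P (b + k * Q) = P (b::nat)"
proof (induction k)
  case (Suc k)
  have "P (b + Suc k * Q) = P ((b + k * Q) + Q)" by (simp add: algebra_simps)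
  also have "\<dots> = P b" by (simp only: periodic Suc.IH)
  finally show ?case .
qed simp

lemma card_periodic_atLeastAtMost_mult:
  fixes P :: "nat \<Rightarrow> bool"
  assumes periodic: "\<And>b. P (b + Q) = P b"
  shows "card {b \<in> {1..k * Q}. P b} = k * card {b \<in> {1..Q}. P b}"
proof (induction k)
  case (Suc k)
  note shift = periodic_add_mult[where P = P, OF periodic, of _ k]
  have "{b \<in> {1..Suc k * Q}. P b} = {b \<in> {1..k * Q}. P b} \<union> (\<lambda>b. b + k * Q) ` {b \<in> {1..Q}. P b}"
  proof (intro equalityI subsetI)
    fix x assume x: "x \<in> {b \<in> {1..Suc k * Q}. P b}"
    show "x \<in> {b \<in> {1..k * Q}. P b} \<union> (\<lambda>b. b + k * Q) ` {b \<in> {1..Q}. P b}"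
    proof (cases "x \<le> k * Q")
      case False
      then have "x - k * Q \<in> {b \<in> {1..Q}. P b}" "x = x - k * Q + k * Q"
        using x shift[of "x - k * Q"] by auto
      then show ?thesis by blast
    qed (use x in auto)
  qed (auto simp: shift)
  moreover have "{b \<in> {1..k * Q}. P b} \<inter> (\<lambda>b. b + k * Q) ` {b \<in> {1..Q}. P b} = {}"
    by auto
  ultimately have "card {b \<in> {1..Suc k * Q}. P b}
      = card {b \<in> {1..k * Q}. P b} + card ((\<lambda>b. b + k * Q) ` {b \<in> {1..Q}. P b})"
    by (simp add: card_Un_disjoint)
  also have "card ((\<lambda>b. b + k * Q) ` {b \<in> {1..Q}. P b}) = card {b \<in> {1..Q}. P b}"
    by (rule card_image) (simp add: inj_on_def)
  finally show ?case using Suc.IH by simp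
qed simp

lemma card_periodic_atLeastAtMost_approx:
  fixes P :: "nat \<Rightarrow> bool"
  assumes "Q > 0" and periodic: "\<And>b. P (b + Q) = P b"
  shows "\<bar>real (card {b \<in> {1..N}. P b}) - real N * card {b \<in> {1..Q}. P b} / Q\<bar> \<le> Q"
proof -
  define k r c where "k = N div Q" and "r = N mod Q" and "c = card {b \<in> {1..Q}. P b}"
  have N: "N = k * Q + r" and "r < Q" using assms(1) by (simp_all add: k_def r_def)
  have "c \<le> Q" unfolding c_def using card_mono[of "{1..Q}" "{b \<in> {1..Q}. P b}"] by fastforce
  have multiple: "card {b \<in> {1..k * Q}. P b} = k * c"
    unfolding c_def by (rule card_periodic_atLeastAtMost_mult[where P = P, OF periodic])
  have "card {b \<in> {1..k * Q}. P b} \<le> card {b \<in> {1..N}. P b}" by (rule card_mono) (auto simp: N)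
  then have lower: "k * c \<le> card {b \<in> {1..N}. P b}" by (simp only: multiple)
  have "card {b \<in> {1..N}. P b} \<le> card ({b \<in> {1..k * Q}. P b} \<union> {k * Q<..N})"
    by (rule card_mono) auto
  also have "\<dots> \<le> card {b \<in> {1..k * Q}. P b} + card {k * Q<..N}" by (rule card_Un_le)
  also have "\<dots> = k * c + r" unfolding multiple by (simp add: N)
  finally have upper: "card {b \<in> {1..N}. P b} \<le> k * c + r" .
  define t where "t = r * (c / Q)"
  have "real c / Q \<le> 1" using \<open>c \<le> Q\<close> assms(1) by simp
  from mult_left_le[OF this, of "real r"] have "0 \<le> t" "t \<le> r" unfolding t_def by simp_all
  moreover have "real k * c \<le> card {b \<in> {1..N}. P b}" "card {b \<in> {1..N}. P b} \<le> real k * c + r"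
    using of_nat_mono[OF lower, where 'a = real] of_nat_mono[OF upper, where 'a = real] by simp_all
  moreover have "real N * c / Q = real k * c + t" unfolding t_def using assms(1) by (simp add: N field_simps)
  ultimately have "\<bar>real (card {b \<in> {1..N}. P b}) - real N * c / Q\<bar> \<le> r" by linarith
  with \<open>r < Q\<close> show ?thesis unfolding c_def by linarith
qed

lemma card_coprime_atLeastAtMost_approx:
  assumes "Q > 0"
  shows "\<bar>real (card {b \<in> {1..N}. coprime b Q}) - real N * totient Q / Q\<bar> \<le> Q"
proof -
  have totient: "card {b \<in> {1..Q}. coprime b Q} = totient Q"
    unfolding totient_def totatives_def by (rule arg_cong[where f = card]) auto
  have periodic: "coprime (b + Q) Q \<longleftrightarrow> coprime b Q" for b
    unfolding coprime_iff_gcd_eq_1 gcd_add1 ..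
  show ?thesis
    using card_periodic_atLeastAtMost_approx[where P = "\<lambda>b. coprime b Q", OF assms periodic]
    unfolding totient .
qed

section \<open>Density of a single L_a\<close>

lemma count_ratio_altdef: "count_ratio S x = card (S \<inter> {1..nat \<lfloor>x\<rfloor>}) / x"
proof -
  have "real n \<le> x \<longleftrightarrow> n \<le> nat \<lfloor>x\<rfloor>" if "n \<ge> 1" for n
    using that by linarith
  then have "{n \<in> S. 1 \<le> n \<and> real n \<le> x} = S \<inter> {1..nat \<lfloor>x\<rfloor>}" by auto
  then show ?thesis unfolding count_ratio_def by simp
qed

lemma tendsto_count_ratio_if_bounded_error:
  assumes "\<forall>\<^sub>F x in at_top. \<bar>real (card (S \<inter> {1..nat \<lfloor>x\<rfloor>})) - c * x\<bar> \<le> C"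
  shows "(count_ratio S \<longlongrightarrow> c) at_top"
proof (rule tendsto_sandwich)
  have "\<forall>\<^sub>F x in at_top. \<bar>count_ratio S x - c\<bar> \<le> C / x"
    using assms eventually_gt_at_top[of 0]
  proof eventually_elim
    case (elim x)
    then have "count_ratio S x - c = (real (card (S \<inter> {1..nat \<lfloor>x\<rfloor>})) - c * x) / x"
      by (simp add: count_ratio_altdef field_simps)
    with elim show ?case by (simp add: divide_right_mono)
  qed
  then show "\<forall>\<^sub>F x in at_top. c - C / x \<le> count_ratio S x" "\<forall>\<^sub>F x in at_top. count_ratio S x \<le> c + C / x"
    by (auto elim: eventually_mono)
  have "((\<lambda>x::real. C / x) \<longlongrightarrow> 0) at_top" by real_asymp
  from tendsto_diff[OF tendsto_const this] tendsto_add[OF tendsto_const this]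
  show "((\<lambda>x. c - C / x) \<longlongrightarrow> c) at_top" "((\<lambda>x. c + C / x) \<longlongrightarrow> c) at_top" by simp_all
qed

lemma Lset_Int_atLeastAtMost:
  assumes "a > 0"
  shows "Lset a \<inter> {1..N} = (\<lambda>b. b * a) ` {b \<in> {1..N div a}. coprime b (primorial_below (Pmax a))}"
  unfolding Lset_eq_image_coprime using assms by (auto simp: less_eq_div_iff_mult_less_eq)

lemma card_Lset_Int_atLeastAtMost:
  assumes "a > 0"
  shows "card (Lset a \<inter> {1..N}) = card {b \<in> {1..N div a}. coprime b (primorial_below (Pmax a))}"
  unfolding Lset_Int_atLeastAtMost[OF assms] using assms by (intro card_image) (simp add: inj_on_def)

lemma card_Lset_Int_atLeastAtMost_le:
  assumes "a > 0"
  shows "card (Lset a \<inter> {1..N}) \<le> N div a"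
proof -
  have "card {b \<in> {1..N div a}. coprime b (primorial_below (Pmax a))} \<le> card {1..N div a}"
    by (rule card_mono) auto
  then show ?thesis unfolding card_Lset_Int_atLeastAtMost[OF assms] by simp
qed

lemma nat_floor_div_approx:
  assumes "a > 0" "x \<ge> 0"
  shows "\<bar>real (nat \<lfloor>x\<rfloor> div a) - x / a\<bar> \<le> 2"
proof -
  define N where "N = nat \<lfloor>x\<rfloor>"
  define M where "M = N div a"
  have "M * a \<le> N" "Suc N \<le> (M + 1) * a" using assms(1) unfolding M_def
    by (simp_all add: Suc_le_eq dividend_less_div_times)
  then have "real M * a \<le> N" "N + 1 \<le> real M * a + a"
    using of_nat_mono[where 'a = real] by (fastforce simp: algebra_simps)+
  moreover have "N \<le> x" "x < N + 1" using assms(2) unfolding N_def by linarith+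
  ultimately have "real M * a \<le> x" "x \<le> real M * a + 2 * a" by linarith+
  then show ?thesis using assms(1) unfolding M_def N_def by (simp add: abs_le_iff field_simps)
qed

lemma tendsto_count_ratio_Lset:
  assumes "a > 0"
  shows "(count_ratio (Lset a) \<longlongrightarrow> dL a) at_top"
proof (rule tendsto_count_ratio_if_bounded_error)
  define Q where "Q = primorial_below (Pmax a)"
  define d where "d = real (totient Q) / Q"
  have "Q > 0" unfolding Q_def by (rule primorial_below_pos)
  then have "0 \<le> d" "d \<le> 1" unfolding d_def by (simp_all add: totient_le)
  have dL: "dL a = d / a" unfolding dL_eq_totient_primorial_below d_def Q_def by simp
  show "\<forall>\<^sub>F x in at_top. \<bar>real (card (Lset a \<inter> {1..nat \<lfloor>x\<rfloor>})) - dL a * x\<bar> \<le> Q + 2"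
    using eventually_ge_at_top[of 0]
  proof eventually_elim
    case (elim x)
    define M where "M = nat \<lfloor>x\<rfloor> div a"
    have "real M * d - dL a * x = d * (real M - x / a)" unfolding dL by (simp add: algebra_simps)
    then have "\<bar>real M * d - dL a * x\<bar> = d * \<bar>real M - x / a\<bar>"
      using \<open>0 \<le> d\<close> by (simp add: abs_mult)
    also have "\<dots> \<le> 1 * 2"
      using \<open>0 \<le> d\<close> \<open>d \<le> 1\<close> nat_floor_div_approx[OF assms elim] unfolding M_def
      by (intro mult_mono) simp_all
    finally have "\<bar>real M * d - dL a * x\<bar> \<le> 2" by simp
    moreover have "\<bar>real (card (Lset a \<inter> {1..nat \<lfloor>x\<rfloor>})) - real M * d\<bar> \<le> Q"
      using card_coprime_atLeastAtMost_approx[OF \<open>Q > 0\<close>, of M] assms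
      unfolding card_Lset_Int_atLeastAtMost[OF assms] M_def d_def Q_def by simp
    ultimately show ?case by linarith
  qed
qed

lemma dL_nonneg: "0 \<le> dL a"
  by (simp add: dL_eq_totient_primorial_below)

lemma dL_le: "dL a \<le> 1 / a"
proof -
  let ?Q = "primorial_below (Pmax a)"
  have "real (totient ?Q) / ?Q \<le> 1" using primorial_below_pos[of "Pmax a"] by (simp add: totient_le)
  then have "real (totient ?Q) / ?Q / a \<le> 1 / a" by (rule divide_right_mono) simp
  then show ?thesis by (simp add: dL_eq_totient_primorial_below mult.commute)
qed

lemma summable_on_dL:
  assumes "(\<lambda>a. 1 / real a) summable_on A"
  shows "dL summable_on A"
  using assms by (rule summable_on_comparison_test) (simp_all add: dL_le dL_nonneg)

section \<open>Density of unions\<close>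

lemma count_ratio_mono:
  assumes "S \<subseteq> T" "x \<ge> 0"
  shows "count_ratio S x \<le> count_ratio T x"
  unfolding count_ratio_altdef using assms
  by (intro divide_right_mono of_nat_mono card_mono) auto

lemma count_ratio_LsetA:
  assumes "disjoint_family_on Lset F" "finite F"
  shows "count_ratio (LsetA F) x = (\<Sum>a\<in>F. count_ratio (Lset a) x)"
proof -
  have "LsetA F \<inter> {1..nat \<lfloor>x\<rfloor>} = (\<Union>a\<in>F. Lset a \<inter> {1..nat \<lfloor>x\<rfloor>})"
    unfolding LsetA_def by blast
  moreover have "card (\<Union>a\<in>F. Lset a \<inter> {1..nat \<lfloor>x\<rfloor>}) = (\<Sum>a\<in>F. card (Lset a \<inter> {1..nat \<lfloor>x\<rfloor>}))"
    using assms by (intro card_UN_disjoint) (auto simp: disjoint_family_on_def)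
  ultimately show ?thesis unfolding count_ratio_altdef by (simp add: sum_divide_distrib)
qed

lemma tendsto_count_ratio_LsetA_finite:
  assumes "\<forall>a\<in>F. a > 0" "disjoint_family_on Lset F" "finite F"
  shows "(count_ratio (LsetA F) \<longlongrightarrow> sum dL F) at_top"
  unfolding count_ratio_LsetA[OF assms(2,3)] using assms(1)
  by (intro tendsto_sum tendsto_count_ratio_Lset) auto

lemma card_LsetA_Int_atLeastAtMost_le_tail:
  assumes "\<forall>a\<in>A. a > 0" "(\<lambda>a. 1 / real a) summable_on A" "F \<subseteq> A"
  shows "real (card (LsetA A \<inter> {1..N}))
    \<le> card (LsetA F \<inter> {1..N}) + N * (\<Sum>\<^sub>\<infinity>a\<in>A - F. 1 / real a)"
proof -
  define G where "G = (A - F) \<inter> {..N}"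
  have "finite G" unfolding G_def by simp
  have cover: "LsetA A \<inter> {1..N} \<subseteq> (LsetA F \<inter> {1..N}) \<union> (\<Union>a\<in>G. Lset a \<inter> {1..N})"
  proof
    fix n assume "n \<in> LsetA A \<inter> {1..N}"
    then obtain a where a: "a \<in> A" "n \<in> Lset a" "n \<in> {1..N}" unfolding LsetA_def by blast
    then have "a \<le> n" unfolding Lset_def by auto
    with a show "n \<in> (LsetA F \<inter> {1..N}) \<union> (\<Union>a\<in>G. Lset a \<inter> {1..N})"
      unfolding LsetA_def G_def by auto
  qed
  have "(\<Sum>a\<in>G. real (card (Lset a \<inter> {1..N}))) \<le> (\<Sum>a\<in>G. N * (1 / real a))"
  proof (rule sum_mono)
    fix a assume "a \<in> G"
    then have "a > 0" using assms(1) unfolding G_def by blast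
    then show "real (card (Lset a \<inter> {1..N})) \<le> N * (1 / real a)"
      using card_Lset_Int_atLeastAtMost_le[of a N] of_nat_div_le_of_nat[of N a, where 'a = real]
      by simp
  qed
  also have "\<dots> = N * (\<Sum>a\<in>G. 1 / real a)" by (simp add: sum_distrib_left)
  also have "\<dots> \<le> N * (\<Sum>\<^sub>\<infinity>a\<in>A - F. 1 / real a)"
    using summable_on_subset_banach[OF assms(2)] \<open>finite G\<close>
    by (intro mult_left_mono finite_sum_le_infsum) (auto simp: G_def)
  finally have tail: "(\<Sum>a\<in>G. real (card (Lset a \<inter> {1..N}))) \<le> N * (\<Sum>\<^sub>\<infinity>a\<in>A - F. 1 / real a)" .
  have "card (LsetA A \<inter> {1..N}) \<le> card ((LsetA F \<inter> {1..N}) \<union> (\<Union>a\<in>G. Lset a \<inter> {1..N}))"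
    using cover \<open>finite G\<close> by (intro card_mono) simp_all
  also have "\<dots> \<le> card (LsetA F \<inter> {1..N}) + card (\<Union>a\<in>G. Lset a \<inter> {1..N})"
    by (rule card_Un_le)
  also have "\<dots> \<le> card (LsetA F \<inter> {1..N}) + (\<Sum>a\<in>G. card (Lset a \<inter> {1..N}))"
    using card_UN_le[OF \<open>finite G\<close>, of "\<lambda>a. Lset a \<inter> {1..N}"] by linarith
  finally show ?thesis using tail by (simp flip: of_nat_sum of_nat_add)
qed

lemma count_ratio_LsetA_le_tail:
  assumes "\<forall>a\<in>A. a > 0" "(\<lambda>a. 1 / real a) summable_on A" "F \<subseteq> A" "x > 0"
  shows "count_ratio (LsetA A) x \<le> count_ratio (LsetA F) x + (\<Sum>\<^sub>\<infinity>a\<in>A - F. 1 / real a)"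
proof -
  define N where "N = nat \<lfloor>x\<rfloor>"
  define T where "T = (\<Sum>\<^sub>\<infinity>a\<in>A - F. 1 / real a)"
  have "0 \<le> T" unfolding T_def by (rule infsum_nonneg) simp
  moreover have "real N \<le> x" unfolding N_def using assms(4) by linarith
  ultimately have "real (card (LsetA A \<inter> {1..N})) \<le> card (LsetA F \<inter> {1..N}) + x * T"
    using card_LsetA_Int_atLeastAtMost_le_tail[OF assms(1-3), of N] mult_right_mono[of "real N" x T]
    unfolding T_def by linarith
  then have "real (card (LsetA A \<inter> {1..N})) / x \<le> (card (LsetA F \<inter> {1..N}) + x * T) / x"
    using assms(4) by (intro divide_right_mono) simp_all
  also have "\<dots> = card (LsetA F \<inter> {1..N}) / x + T"
    using assms(4) by (simp add: add_divide_distrib)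
  finally show ?thesis unfolding count_ratio_altdef N_def T_def .
qed

lemma ereal_le_lower_density:
  assumes "S \<subseteq> T" "(count_ratio S \<longlongrightarrow> d) at_top"
  shows "ereal d \<le> lower_density T"
proof -
  have "ereal d = Liminf at_top (\<lambda>x. ereal (count_ratio S x))"
    using assms(2) by (intro lim_imp_Liminf[symmetric]) simp_all
  also have "\<dots> \<le> lower_density T"
    unfolding lower_density_def
  proof (rule Liminf_mono)
    show "\<forall>\<^sub>F x in at_top. ereal (count_ratio S x) \<le> ereal (count_ratio T x)"
      using eventually_ge_at_top[of 0] by eventually_elim (simp add: count_ratio_mono[OF assms(1)])
  qed
  finally show ?thesis .
qed

lemma enn2ereal_infsum_le_if_finite_sums_le:
  fixes f :: "'a \<Rightarrow> real"
  assumes "\<And>a. a \<in> A \<Longrightarrow> 0 \<le> f a" "\<And>F. finite F \<Longrightarrow> F \<subseteq> A \<Longrightarrow> ereal (sum f F) \<le> L"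
  shows "enn2ereal (\<Sum>\<^sub>\<infinity>a\<in>A. ennreal (f a)) \<le> L"
proof -
  have "0 \<le> L" using assms(2)[of "{}"] by (simp add: zero_ereal_def)
  have "(\<Sum>\<^sub>\<infinity>a\<in>A. ennreal (f a)) \<le> e2ennreal L"
  proof (rule infsum_le_finite_sums)
    show "(\<lambda>a. ennreal (f a)) summable_on A" by (rule nonneg_summable_on_complete) simp
    fix F assume F: "finite F" "F \<subseteq> A"
    then have "(\<Sum>a\<in>F. ennreal (f a)) = e2ennreal (ereal (sum f F))"
      using assms(1) by (simp add: sum_nonneg subset_iff)
    also have "\<dots> \<le> e2ennreal L" using assms(2)[OF F] by (rule e2ennreal_mono)
    finally show "(\<Sum>a\<in>F. ennreal (f a)) \<le> e2ennreal L" .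
  qed
  then have "enn2ereal (\<Sum>\<^sub>\<infinity>a\<in>A. ennreal (f a)) \<le> enn2ereal (e2ennreal L)"
    by (simp add: less_eq_ennreal.rep_eq)
  also have "\<dots> = L" using \<open>0 \<le> L\<close> by (rule enn2ereal_e2ennreal)
  finally show ?thesis .
qed

lemma tendsto_infsum_Diff_finite_subsets:
  fixes f :: "'a \<Rightarrow> 'b::banach"
  assumes "f summable_on A"
  shows "((\<lambda>F. \<Sum>\<^sub>\<infinity>a\<in>A - F. f a) \<longlongrightarrow> 0) (finite_subsets_at_top A)"
proof -
  have "((\<lambda>F. infsum f A - sum f F) \<longlongrightarrow> infsum f A - infsum f A) (finite_subsets_at_top A)"
    using has_sum_infsum[OF assms] unfolding has_sum_def by (intro tendsto_diff tendsto_const)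
  moreover have "\<forall>\<^sub>F F in finite_subsets_at_top A. infsum f A - sum f F = infsum f (A - F)"
    using assms by (intro eventually_finite_subsets_at_top_weakI) (simp add: infsum_Diff)
  ultimately show ?thesis by (simp add: tendsto_cong)
qed

lemma tendsto_sandwich_finite_subsets:
  fixes g :: "'b \<Rightarrow> real" and h :: "'a set \<Rightarrow> 'b \<Rightarrow> real"
  assumes "\<And>F. finite F \<Longrightarrow> F \<subseteq> A \<Longrightarrow> (h F \<longlongrightarrow> s F) G"
    and "\<And>F. finite F \<Longrightarrow> F \<subseteq> A \<Longrightarrow> \<forall>\<^sub>F x in G. h F x \<le> g x \<and> g x \<le> h F x + t F"
    and "(s \<longlongrightarrow> d) (finite_subsets_at_top A)" "(t \<longlongrightarrow> 0) (finite_subsets_at_top A)"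
  shows "(g \<longlongrightarrow> d) G"
proof (rule tendstoI)
  fix e :: real assume "e > 0"
  then have "\<forall>\<^sub>F F in finite_subsets_at_top A. dist (s F) d < e / 3 \<and> dist (t F) 0 < e / 3"
    using assms(3,4) by (intro eventually_conj tendstoD) simp_all
  then obtain F where F: "finite F" "F \<subseteq> A" "\<bar>s F - d\<bar> < e / 3" "\<bar>t F\<bar> < e / 3"
    unfolding eventually_finite_subsets_at_top dist_real_def by auto
  have "\<forall>\<^sub>F x in G. dist (h F x) (s F) < e / 3"
    using assms(1)[OF F(1,2)] \<open>e > 0\<close> by (intro tendstoD) simp_all
  with assms(2)[OF F(1,2)] show "\<forall>\<^sub>F x in G. dist (g x) d < e"
  proof eventually_elim
    case (elim x)
    then show ?case using F(3,4) unfolding dist_real_def abs_less_iff by linarith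
  qed
qed

lemma LsetA_mono: "F \<subseteq> A \<Longrightarrow> LsetA F \<subseteq> LsetA A"
  unfolding LsetA_def by blast

lemma lower_density_LsetA_ge:
  assumes "\<forall>a\<in>A. a > 0" "disjoint_family_on Lset A"
  shows "enn2ereal (\<Sum>\<^sub>\<infinity>a\<in>A. ennreal (dL a)) \<le> lower_density (LsetA A)"
proof (rule enn2ereal_infsum_le_if_finite_sums_le)
  fix F assume "finite F" "F \<subseteq> A"
  with assms have "(count_ratio (LsetA F) \<longlongrightarrow> sum dL F) at_top"
    by (intro tendsto_count_ratio_LsetA_finite) (auto intro: disjoint_family_on_mono)
  with \<open>F \<subseteq> A\<close> show "ereal (sum dL F) \<le> lower_density (LsetA A)"
    by (rule ereal_le_lower_density[OF LsetA_mono])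
qed (rule dL_nonneg)

lemma tendsto_count_ratio_LsetA:
  assumes "\<forall>a\<in>A. a > 0" "disjoint_family_on Lset A" and summable: "(\<lambda>a. 1 / real a) summable_on A"
  shows "(count_ratio (LsetA A) \<longlongrightarrow> infsum dL A) at_top"
proof (rule tendsto_sandwich_finite_subsets)
  from summable_on_dL[OF summable] show "(sum dL \<longlongrightarrow> infsum dL A) (finite_subsets_at_top A)"
    unfolding has_sum_def[symmetric] by (rule has_sum_infsum)
  show "((\<lambda>F. \<Sum>\<^sub>\<infinity>a\<in>A - F. 1 / real a) \<longlongrightarrow> 0) (finite_subsets_at_top A)"
    using summable by (rule tendsto_infsum_Diff_finite_subsets)
  fix F assume "finite F" "F \<subseteq> A"
  with assms(1,2) show "(count_ratio (LsetA F) \<longlongrightarrow> sum dL F) at_top"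
    by (intro tendsto_count_ratio_LsetA_finite) (auto intro: disjoint_family_on_mono)
  show "\<forall>\<^sub>F x in at_top. count_ratio (LsetA F) x \<le> count_ratio (LsetA A) x \<and>
      count_ratio (LsetA A) x \<le> count_ratio (LsetA F) x + (\<Sum>\<^sub>\<infinity>a\<in>A - F. 1 / real a)"
    using eventually_gt_at_top[of 0]
    by eventually_elim (use \<open>F \<subseteq> A\<close> in
        \<open>simp add: count_ratio_mono LsetA_mono count_ratio_LsetA_le_tail[OF assms(1) summable]\<close>)
qed

theorem lemma6p1:
  fixes A :: "nat set"
  assumes "\<forall>a\<in>A. a > 1"
    and "L_primitive A"
  shows "enn2ereal (\<Sum>\<^sub>\<infinity>a\<in>A. ennreal (dL a)) \<le> lower_density (LsetA A) \<and>
         ((\<lambda>a. 1 / real a) summable_on A \<longrightarrow>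
           (\<exists>d. (dL has_sum d) A \<and> (count_ratio (LsetA A) \<longlongrightarrow> d) at_top))"
proof (intro conjI impI)
  have pos: "\<forall>a\<in>A. a > 0" using assms(1) by auto
  have disjoint: "disjoint_family_on Lset A" using pos assms(2) by (rule disjoint_family_Lset)
  show "enn2ereal (\<Sum>\<^sub>\<infinity>a\<in>A. ennreal (dL a)) \<le> lower_density (LsetA A)"
    using pos disjoint by (rule lower_density_LsetA_ge)
  assume summable: "(\<lambda>a. 1 / real a) summable_on A"
  with summable_on_dL tendsto_count_ratio_LsetA[OF pos disjoint summable]
  show "\<exists>d. (dL has_sum d) A \<and> (count_ratio (LsetA A) \<longlongrightarrow> d) at_top"
    by (blast intro: has_sum_infsum)
qed

end
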